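(* When Alice and Bob share $\Theta(\log N)$ EPR pairs, there is a quantum protocol of cost $O(\log N)$ in the entangled-fingerprinting model for the $\mathsf{ABCD}$ problem on $N\times N$ matrices such that every \textsc{yes} instance is accepted (output 1) with probability at least $0.95$ and every \textsc{no} instance is accepted with probability at most $0.55$.
   Context: Throughout, $N=2^n$ for a positive integer $n$, and $\mathsf{SU}(N)$ denotes the group of $N\times N$ complex unitary matrices of determinant $1$. The $\mathsf{ABCD}$ problem: Alice is given $A,C\in\mathsf{SU}(N)$ explicitly and Bob is given $B,D\in\mathsf{SU}(N)$ explicitly; the required output is $1$ (a \textsc{yes} instance) if $\mathrm{Tr}(ABCD)\ge 0.9N$ and $0$ (a \textsc{no} instance) if $\mathrm{Tr}(ABCD)\le 0.1N$, promised that one of these holds. Quantum simultaneous model with entanglement: Alice and Bob share an input-independent entangled state; each applies a quantum operation depending on their own input to their part and sends all their qubits to a third party Charlie, who applies an input-independent projective measurement whose outcome is the output; the cost is the total number of qubits sent to Charlie. The entangled-fingerprinting model is the special case in which Alice and Bob use their entanglement to prepare a state of the form $\frac{1}{\sqrt{2N}}\sum_{i\in[N]}\big(\lvert 0_A 0_B\rangle\lvert u_i\rangle_A\lvert v_i\rangle_B+\lvert 1_A1_B\rangle\lvert u_i'\rangle_A\lvert v_i'\rangle_B\big)$, where the states $\lvert u_i\rangle,\lvert u_i'\rangle$ are held (prepared) by Alice and $\lvert v_i\rangle,\lvert v_i'\rangle$ by Bob, and send everything to Charlie; Charlie uncomputes the second qubit (obtaining $\frac{1}{\sqrt{2N}}\sum_i(\lvert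 0\rangle\lvert u_i\rangle\lvert v_i\rangle+\lvert1\rangle\lvert u_i'\rangle\lvert v_i'\rangle)$), performs a swap of the last two registers controlled on the first qubit, measures the first qubit in the Hadamard basis, and outputs $1$ iff the outcome is $\lvert +\rangle$ (possibly repeated in parallel with fresh copies, with the output computed from the swap-test statistics). *)

theory Defs
  imports "HOL-Analysis.Analysis"
begin

text \<open>Finite-dimensional complex matrices of varying size d are represented as
  functions nat => nat => complex, only the entries with both indices below d
  being relevant; vectors in C^d are functions nat => complex restricted to
  indices below d.\<close>

type_synonym cmat = "nat \<Rightarrow> nat \<Rightarrow> complex"

definition mmul :: "nat \<Rightarrow> cmat \<Rightarrow> cmat \<Rightarrow> cmat" where
  "mmul d X Y = (\<lambda>i j. \<Sum>k<d. X i k * Y k j)"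

definition mtrace :: "nat \<Rightarrow> cmat \<Rightarrow> complex" where
  "mtrace d X = (\<Sum>i<d. X i i)"

definition mdet :: "nat \<Rightarrow> cmat \<Rightarrow> complex" where
  "mdet d X = (\<Sum>p\<in>{p. p permutes {..<d}}. of_int (sign p) * (\<Prod>i<d. X i (p i)))"

definition is_unitary :: "nat \<Rightarrow> cmat \<Rightarrow> bool" where
  "is_unitary d U \<longleftrightarrow> (\<forall>i<d. \<forall>j<d. (\<Sum>k<d. cnj (U k i) * U k j) = (if i = j then 1 else 0))"

definition SU :: "nat \<Rightarrow> cmat set" where
  "SU d = {U. is_unitary d U \<and> mdet d U = 1}"

definition vnorm2 :: "nat \<Rightarrow> (nat \<Rightarrow> complex) \<Rightarrow> real" where
  "vnorm2 d u = (\<Sum>i<d. (cmod (u i))\<^sup>2)"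

text \<open>Shared input-independent entangled state: Alice and Bob each hold a register
  of q qubits (index x < 2^q for Alice, y < 2^q for Bob).  The k low-order qubits of
  Alice's register are maximally entangled with the k low-order qubits of Bob's
  register (k EPR pairs); all remaining qubits are ancillas in state |0>.
  Amplitude of |x>_A |y>_B.\<close>
definition epr_state :: "nat \<Rightarrow> nat \<Rightarrow> nat \<Rightarrow> complex" where
  "epr_state k x y = (if x < 2^k \<and> y = x then 1 / complex_of_real (sqrt (2^k)) else 0)"

definition joint_state :: "nat \<Rightarrow> nat \<Rightarrow> cmat \<Rightarrow> cmat \<Rightarrow> nat \<Rightarrow> nat \<Rightarrow> complex" where
  "joint_state q k UA UB x y =
     (\<Sum>x0<2^q. \<Sum>y0<2^q. UA x x0 * UB y y0 * epr_state k x0 y0)"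

text \<open>Register layout for the entangled-fingerprinting model: Alice's register of
  q = m+1 qubits is |a>|x'> with the first (control) qubit a = x mod 2 and the
  m-qubit register x' = x div 2, i.e. x = a + 2 x'; likewise for Bob.\<close>
definition fingerprint_form ::
  "nat \<Rightarrow> nat \<Rightarrow> (nat \<Rightarrow> nat \<Rightarrow> complex) \<Rightarrow> bool" where
  "fingerprint_form N m psi \<longleftrightarrow>
     (\<exists>u u' v v' :: nat \<Rightarrow> nat \<Rightarrow> complex.
        (\<forall>i<N. vnorm2 (2^m) (u i) = 1 \<and> vnorm2 (2^m) (u' i) = 1 \<and>
               vnorm2 (2^m) (v i) = 1 \<and> vnorm2 (2^m) (v' i) = 1) \<and>
        (\<forall>a<2. \<forall>b<2. \<forall>x<2^m. \<forall>y<2^m.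
           psi (a + 2 * x) (b + 2 * y) =
             1 / complex_of_real (sqrt (2 * real N)) *
             (\<Sum>i<N. (if a = 0 \<and> b = 0 then u i x * v i y else 0)
                    + (if a = 1 \<and> b = 1 then u' i x * v' i y else 0))))"

text \<open>Charlie's fixed measurement on the received state psi (Alice's register
  |a>|x'>, Bob's register |b>|y'>): uncompute Bob's control qubit (CNOT from a to b),
  swap the m-qubit registers controlled on a, measure a in the Hadamard basis,
  and output 1 iff the outcome is |+>.  Probability of outcome 1 (the amplitude
  of |+>|b'>|x'>|y'> after these steps is
  (psi(0,x',b',y') + psi(1,y',1-b',x'))/sqrt 2 for b' in {0,1}; the b' = 1 terms
  vanish for states of fingerprint form).\<close>
definition accept_prob :: "nat \<Rightarrow> (nat \<Rightarrow> nat \<Rightarrow> complex) \<Rightarrow> real" where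
  "accept_prob m psi =
     (\<Sum>x<2^m. \<Sum>y<2^m.
        (cmod (psi (0 + 2 * x) (0 + 2 * y) + psi (1 + 2 * y) (1 + 2 * x)))\<^sup>2 / 2
      + (cmod (psi (0 + 2 * x) (1 + 2 * y) + psi (1 + 2 * y) (0 + 2 * x)))\<^sup>2 / 2)"

end

theory Submission
  imports Defs "Jordan_Normal_Form.Determinant"
begin

text \<open>Alice applies the controlled unitary acting as \<open>conj A\<close> on the branch with
  control qubit 0 and as \<open>C\<close> on the branch with control qubit 1; Bob likewise applies
  \<open>B\<^sup>\<dagger>\<close> and \<open>D\<^sup>T\<close>.  On a maximally entangled state, local unitaries \<open>U \<otimes> V\<close>
  produce the amplitude matrix \<open>U V\<^sup>T / \<surd>(2N)\<close>, so the two branches carry the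
  amplitude matrices \<open>conj (A B)\<close> and \<open>C D\<close>: a fingerprint state whose vectors are the
  columns of \<open>conj A\<close>, \<open>B\<^sup>\<dagger>\<close>, \<open>C\<close> and \<open>D\<^sup>T\<close>.  Both matrices are unitary, hence have
  Frobenius norm \<open>\<surd>N\<close>, so the swap test accepts with probability
  \<open>1/2 + Re tr (A B C D) / (2N)\<close>.  With \<open>N = 2\<^sup>n\<close> this uses \<open>n + 1\<close> EPR pairs and
  sends \<open>2 (n + 1)\<close> qubits.\<close>

lemma is_unitary_rows:
  assumes "is_unitary d U" and "i < d" and "j < d"
  shows "(\<Sum>k<d. U i k * cnj (U j k)) = (if i = j then 1 else 0)"
proof -
  define X where "X = mat d d (\<lambda>(i, j). cnj (U j i))"
  define Y where "Y = mat d d (\<lambda>(i, j). U i j)"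
  have X: "X \<in> carrier_mat d d" and Y: "Y \<in> carrier_mat d d"
    unfolding X_def Y_def by auto
  have "X * Y = 1\<^sub>m d"
  proof (rule eq_matI)
    fix i j assume "i < dim_row (1\<^sub>m d :: complex mat)" "j < dim_col (1\<^sub>m d :: complex mat)"
    then show "(X * Y) $$ (i, j) = 1\<^sub>m d $$ (i, j)"
      using assms(1) unfolding is_unitary_def X_def Y_def
      by (auto simp: scalar_prod_def lessThan_atLeast0 intro!: sum.cong)
  qed (auto simp: X_def Y_def)
  then have "Y * X = 1\<^sub>m d"
    using mat_mult_left_right_inverse[OF X Y] by blast
  then have "(Y * X) $$ (i, j) = (if i = j then 1 else 0)"
    using assms(2,3) by simp
  then show ?thesis
    using assms(2,3) unfolding X_def Y_def
    by (auto simp: scalar_prod_def lessThan_atLeast0 intro!: sum.cong)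
qed

lemma is_unitary_cnj:
  assumes "is_unitary d U"
  shows "is_unitary d (\<lambda>i j. cnj (U i j))"
  unfolding is_unitary_def
proof (intro allI impI)
  fix i j assume "i < d" "j < d"
  have "(\<Sum>k<d. cnj (cnj (U k i)) * cnj (U k j)) = cnj (\<Sum>k<d. cnj (U k i) * U k j)"
    by (simp add: cnj_sum)
  then show "(\<Sum>k<d. cnj (cnj (U k i)) * cnj (U k j)) = (if i = j then 1 else 0)"
    using assms \<open>i < d\<close> \<open>j < d\<close> unfolding is_unitary_def by simp
qed

lemma is_unitary_adjoint: "is_unitary d U \<Longrightarrow> is_unitary d (\<lambda>i j. cnj (U j i))"
  using is_unitary_rows unfolding is_unitary_def by simp

lemma is_unitary_transpose: "is_unitary d U \<Longrightarrow> is_unitary d (\<lambda>i j. U j i)"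
  using is_unitary_cnj[OF is_unitary_adjoint] by simp

lemma is_unitary_mmul:
  assumes A: "is_unitary d A" and B: "is_unitary d B"
  shows "is_unitary d (mmul d A B)"
  unfolding is_unitary_def
proof (intro allI impI)
  fix i j assume "i < d" "j < d"
  have "(\<Sum>k<d. cnj (mmul d A B k i) * mmul d A B k j)
      = (\<Sum>k<d. \<Sum>l<d. \<Sum>l'<d. cnj (A k l) * A k l' * (cnj (B l i) * B l' j))"
    unfolding mmul_def by (simp add: cnj_sum sum_distrib_left sum_distrib_right mult_ac)
  also have "\<dots> = (\<Sum>l<d. \<Sum>l'<d. (\<Sum>k<d. cnj (A k l) * A k l') * (cnj (B l i) * B l' j))"
    by (subst sum.swap, rule sum.cong[OF refl], subst sum.swap) (simp add: sum_distrib_right)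
  also have "\<dots> = (\<Sum>l<d. \<Sum>l'<d. if l = l' then cnj (B l i) * B l' j else 0)"
    using A unfolding is_unitary_def by (intro sum.cong refl) auto
  also have "\<dots> = (\<Sum>l<d. cnj (B l i) * B l j)"
    by simp
  also have "\<dots> = (if i = j then 1 else 0)"
    using B \<open>i < d\<close> \<open>j < d\<close> unfolding is_unitary_def by simp
  finally show "(\<Sum>k<d. cnj (mmul d A B k i) * mmul d A B k j) = (if i = j then 1 else 0)" .
qed

lemma SU_is_unitary: "U \<in> SU d \<Longrightarrow> is_unitary d U"
  by (simp add: SU_def)

lemma vnorm2_unitary_column:
  assumes "is_unitary d U" and "j < d"
  shows "vnorm2 d (\<lambda>i. U i j) = 1"
proof -
  have "complex_of_real (vnorm2 d (\<lambda>i. U i j)) = (\<Sum>i<d. cnj (U i j) * U i j)"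
    unfolding vnorm2_def of_real_sum complex_norm_square by (simp add: mult.commute)
  also have "\<dots> = 1"
    using assms unfolding is_unitary_def by simp
  finally show ?thesis by simp
qed

lemma unitary_sum_cmod2:
  assumes "is_unitary d U"
  shows "(\<Sum>i<d. \<Sum>j<d. (cmod (U i j))\<^sup>2) = real d"
proof -
  have "(\<Sum>i<d. \<Sum>j<d. (cmod (U i j))\<^sup>2) = (\<Sum>j<d. vnorm2 d (\<lambda>i. U i j))"
    unfolding vnorm2_def by (rule sum.swap)
  also have "\<dots> = (\<Sum>j<d. 1)"
    using vnorm2_unitary_column[OF assms] by simp
  finally show ?thesis by simp
qed

lemma mmul_assoc: "mmul d (mmul d X Y) Z = mmul d X (mmul d Y Z)"
  unfolding mmul_def
  by (intro ext) (simp add: sum_distrib_left sum_distrib_right mult.assoc, rule sum.swap)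

lemma mtrace_mmul: "mtrace d (mmul d X Y) = (\<Sum>i<d. \<Sum>k<d. X i k * Y k i)"
  by (simp add: mtrace_def mmul_def)

lemma cmod_cnj_add: "(cmod (cnj w + z))\<^sup>2 = (cmod w)\<^sup>2 + (cmod z)\<^sup>2 + 2 * Re (w * z)"
  unfolding cmod_power2 by (simp add: power2_eq_square algebra_simps)

lemma sum_lessThan_double:
  fixes d :: nat
  shows "(\<Sum>z<2 * d. f z) = (\<Sum>i<d. \<Sum>a<2. f (a + 2 * i))"
  by (induction d) (simp_all add: numeral_2_eq_2 add.assoc)

lemma less_double_cases:
  fixes x d :: nat
  assumes "x < 2 * d"
  obtains a x' where "a < 2" "x' < d" "x = a + 2 * x'"
  using assms by (intro that[of "x mod 2" "x div 2"]) auto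

text \<open>The controlled unitary \<open>|0\<rangle>\<langle>0| \<otimes> M0 + |1\<rangle>\<langle>1| \<otimes> M1\<close> in the register
  layout of \<open>fingerprint_form\<close>, where the control qubit is the low-order bit.\<close>

definition block_diag :: "nat \<Rightarrow> cmat \<Rightarrow> cmat \<Rightarrow> cmat" where
  "block_diag d M0 M1 = (\<lambda>x y.
     if x < 2 * d \<and> y < 2 * d \<and> x mod 2 = y mod 2
     then (if x mod 2 = 0 then M0 (x div 2) (y div 2) else M1 (x div 2) (y div 2))
     else 0)"

lemma block_diag_apply:
  assumes "a < 2" "b < 2" "x < d" "y < d"
  shows "block_diag d M0 M1 (a + 2 * x) (b + 2 * y)
    = (if a = 0 \<and> b = 0 then M0 x y else 0) + (if a = 1 \<and> b = 1 then M1 x y else 0)"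
  using assms by (auto simp: block_diag_def less_2_cases_iff)

lemma is_unitary_block_diag:
  assumes U0: "is_unitary d M0" and U1: "is_unitary d M1"
  shows "is_unitary (2 * d) (block_diag d M0 M1)"
  unfolding is_unitary_def
proof (intro allI impI)
  fix i j assume "i < 2 * d" "j < 2 * d"
  then obtain a i' b j' where ab: "a < 2" "b < 2" and ij': "i' < d" "j' < d"
    and ij: "i = a + 2 * i'" "j = b + 2 * j'"
    by (elim less_double_cases)
  have "(\<Sum>k<2 * d. cnj (block_diag d M0 M1 k i) * block_diag d M0 M1 k j)
      = (\<Sum>k<d. \<Sum>c<2. cnj (block_diag d M0 M1 (c + 2 * k) (a + 2 * i'))
                            * block_diag d M0 M1 (c + 2 * k) (b + 2 * j'))"
    unfolding ij by (rule sum_lessThan_double)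
  also have "\<dots> = (\<Sum>k<d. \<Sum>c<(2::nat).
      cnj ((if c = 0 \<and> a = 0 then M0 k i' else 0) + (if c = 1 \<and> a = 1 then M1 k i' else 0))
      * ((if c = 0 \<and> b = 0 then M0 k j' else 0) + (if c = 1 \<and> b = 1 then M1 k j' else 0)))"
    using ab ij' by (intro sum.cong refl) (simp add: block_diag_apply)
  also have "\<dots> = (\<Sum>k<d. (if a = 0 \<and> b = 0 then cnj (M0 k i') * M0 k j' else 0)
                      + (if a = 1 \<and> b = 1 then cnj (M1 k i') * M1 k j' else 0))"
    using ab by (intro sum.cong refl) (auto simp: numeral_2_eq_2 less_2_cases_iff)
  also have "\<dots> = (if a = b \<and> i' = j' then 1 else 0)"
    using ab ij' U0 U1 unfolding is_unitary_def
    by (auto simp: sum.distrib less_2_cases_iff)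
  also have "\<dots> = (if i = j then 1 else 0)"
    using ab unfolding ij by (auto simp: less_2_cases_iff; presburger)
  finally show "(\<Sum>k<2 * d. cnj (block_diag d M0 M1 k i) * block_diag d M0 M1 k j)
      = (if i = j then 1 else 0)" .
qed

lemma joint_state_maximally_entangled:
  "joint_state q q UA UB x y = 1 / complex_of_real (sqrt (2 ^ q)) * (\<Sum>z<2 ^ q. UA x z * UB y z)"
  unfolding joint_state_def epr_state_def
  by (simp add: if_distrib sum_distrib_left mult_ac cong: if_cong)

lemma joint_state_block_diag:
  assumes "a < 2" "b < 2" "x < 2 ^ m" "y < 2 ^ m"
  shows "joint_state (m + 1) (m + 1) (block_diag (2 ^ m) P0 P1) (block_diag (2 ^ m) Q0 Q1)
      (a + 2 * x) (b + 2 * y)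
    = 1 / complex_of_real (sqrt (2 * real (2 ^ m))) *
      (\<Sum>i<2 ^ m. (if a = 0 \<and> b = 0 then P0 x i * Q0 y i else 0)
               + (if a = 1 \<and> b = 1 then P1 x i * Q1 y i else 0))"
proof -
  have "(\<Sum>z<2 ^ (m + 1). block_diag (2 ^ m) P0 P1 (a + 2 * x) z * block_diag (2 ^ m) Q0 Q1 (b + 2 * y) z)
      = (\<Sum>i<2 ^ m. \<Sum>c<2. block_diag (2 ^ m) P0 P1 (a + 2 * x) (c + 2 * i)
                             * block_diag (2 ^ m) Q0 Q1 (b + 2 * y) (c + 2 * i))"
    unfolding power_add power_one_right mult.commute[of _ 2] by (rule sum_lessThan_double)
  also have "\<dots> = (\<Sum>i<2 ^ m. \<Sum>c<(2::nat).
      ((if a = 0 \<and> c = 0 then P0 x i else 0) + (if a = 1 \<and> c = 1 then P1 x i else 0))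
      * ((if b = 0 \<and> c = 0 then Q0 y i else 0) + (if b = 1 \<and> c = 1 then Q1 y i else 0)))"
    using assms by (intro sum.cong refl) (simp add: block_diag_apply)
  also have "\<dots> = (\<Sum>i<2 ^ m. (if a = 0 \<and> b = 0 then P0 x i * Q0 y i else 0)
                         + (if a = 1 \<and> b = 1 then P1 x i * Q1 y i else 0))"
    using assms(1,2) by (intro sum.cong refl) (auto simp: numeral_2_eq_2 less_2_cases_iff)
  finally show ?thesis
    unfolding joint_state_maximally_entangled by simp
qed

lemma swap_test_accept_prob:
  fixes psi :: "nat \<Rightarrow> nat \<Rightarrow> complex" and u v u' v' :: "nat \<Rightarrow> nat \<Rightarrow> complex"
  assumes psi: "\<And>a b x y. a < 2 \<Longrightarrow> b < 2 \<Longrightarrow> x < 2 ^ m \<Longrightarrow> y < 2 ^ m \<Longrightarrow>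
    psi (a + 2 * x) (b + 2 * y) = 1 / complex_of_real (sqrt (2 * real N)) *
      (\<Sum>i<N. (if a = 0 \<and> b = 0 then u i x * v i y else 0)
             + (if a = 1 \<and> b = 1 then u' i x * v' i y else 0))"
  shows "accept_prob m psi
    = (\<Sum>x<2 ^ m. \<Sum>y<2 ^ m. (cmod ((\<Sum>i<N. u i x * v i y) + (\<Sum>i<N. u' i y * v' i x)))\<^sup>2)
      / (4 * real N)"
proof -
  let ?s = "1 / complex_of_real (sqrt (2 * real N))"
  have "accept_prob m psi
    = (\<Sum>x<2 ^ m. \<Sum>y<2 ^ m.
         (cmod (?s * ((\<Sum>i<N. u i x * v i y) + (\<Sum>i<N. u' i y * v' i x))))\<^sup>2 / 2)"
    unfolding accept_prob_def
  proof (intro sum.cong refl)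
    fix x y :: nat assume "x \<in> {..<2 ^ m}" "y \<in> {..<2 ^ m}"
    then show "(cmod (psi (0 + 2 * x) (0 + 2 * y) + psi (1 + 2 * y) (1 + 2 * x)))\<^sup>2 / 2
        + (cmod (psi (0 + 2 * x) (1 + 2 * y) + psi (1 + 2 * y) (0 + 2 * x)))\<^sup>2 / 2
      = (cmod (?s * ((\<Sum>i<N. u i x * v i y) + (\<Sum>i<N. u' i y * v' i x))))\<^sup>2 / 2"
      using psi[of 0 0 x y] psi[of 1 1 y x] psi[of 0 1 x y] psi[of 1 0 y x]
      by (simp add: distrib_left)
  qed
  also have "\<dots> = (\<Sum>x<2 ^ m. \<Sum>y<2 ^ m.
         (cmod ((\<Sum>i<N. u i x * v i y) + (\<Sum>i<N. u' i y * v' i x)))\<^sup>2 / (4 * real N))"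
    by (intro sum.cong refl) (simp add: norm_mult norm_divide power_mult_distrib power_divide)
  finally show ?thesis
    by (simp add: sum_divide_distrib)
qed

definition abcd_alice :: "nat \<Rightarrow> cmat \<Rightarrow> cmat \<Rightarrow> cmat" where
  "abcd_alice d A C = block_diag d (\<lambda>x i. cnj (A x i)) C"

definition abcd_bob :: "nat \<Rightarrow> cmat \<Rightarrow> cmat \<Rightarrow> cmat" where
  "abcd_bob d B D = block_diag d (\<lambda>y i. cnj (B i y)) (\<lambda>y i. D i y)"

abbreviation abcd_state :: "nat \<Rightarrow> cmat \<Rightarrow> cmat \<Rightarrow> cmat \<Rightarrow> cmat \<Rightarrow> nat \<Rightarrow> nat \<Rightarrow> complex" where
  "abcd_state m A B C D \<equiv> joint_state (m + 1) (m + 1) (abcd_alice (2 ^ m) A C) (abcd_bob (2 ^ m) B D)"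

lemma is_unitary_abcd_alice:
  "is_unitary d A \<Longrightarrow> is_unitary d C \<Longrightarrow> is_unitary (2 * d) (abcd_alice d A C)"
  unfolding abcd_alice_def by (rule is_unitary_block_diag[OF is_unitary_cnj])

lemma is_unitary_abcd_bob:
  "is_unitary d B \<Longrightarrow> is_unitary d D \<Longrightarrow> is_unitary (2 * d) (abcd_bob d B D)"
  unfolding abcd_bob_def by (rule is_unitary_block_diag[OF is_unitary_adjoint is_unitary_transpose])

lemma abcd_state_amplitude:
  assumes "a < 2" "b < 2" "x < 2 ^ m" "y < 2 ^ m"
  shows "abcd_state m A B C D (a + 2 * x) (b + 2 * y)
    = 1 / complex_of_real (sqrt (2 * real (2 ^ m))) *
      (\<Sum>i<2 ^ m. (if a = 0 \<and> b = 0 then cnj (A x i) * cnj (B i y) else 0)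
               + (if a = 1 \<and> b = 1 then C x i * D i y else 0))"
  unfolding abcd_alice_def abcd_bob_def using assms by (rule joint_state_block_diag)

lemma abcd_fingerprint_form:
  assumes A: "is_unitary (2 ^ m) A" and B: "is_unitary (2 ^ m) B"
    and C: "is_unitary (2 ^ m) C" and D: "is_unitary (2 ^ m) D"
  shows "fingerprint_form (2 ^ m) m (abcd_state m A B C D)"
  unfolding fingerprint_form_def
proof (rule exI[of _ "\<lambda>i x. cnj (A x i)"], rule exI[of _ "\<lambda>i x. C x i"],
    rule exI[of _ "\<lambda>i y. cnj (B i y)"], rule exI[of _ "\<lambda>i y. D i y"], intro conjI allI impI)
  fix i :: nat assume "i < 2 ^ m"
  then show "vnorm2 (2 ^ m) (\<lambda>x. cnj (A x i)) = 1" "vnorm2 (2 ^ m) (\<lambda>x. C x i) = 1"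
    "vnorm2 (2 ^ m) (\<lambda>y. cnj (B i y)) = 1" "vnorm2 (2 ^ m) (\<lambda>y. D i y) = 1"
    by (rule vnorm2_unitary_column[OF is_unitary_cnj[OF A]] vnorm2_unitary_column[OF C]
        vnorm2_unitary_column[OF is_unitary_adjoint[OF B]]
        vnorm2_unitary_column[OF is_unitary_transpose[OF D]])+
qed (fact abcd_state_amplitude)

lemma abcd_accept_prob:
  fixes m :: nat and A B C D :: cmat
  defines "N \<equiv> 2 ^ m"
  assumes A: "is_unitary N A" and B: "is_unitary N B"
    and C: "is_unitary N C" and D: "is_unitary N D"
  shows "accept_prob m (abcd_state m A B C D)
    = 1 / 2 + Re (mtrace N (mmul N (mmul N (mmul N A B) C) D)) / (2 * real N)"
proof -
  let ?P = "mmul N A B" and ?Q = "mmul N C D"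
  have "accept_prob m (abcd_state m A B C D)
    = (\<Sum>x<N. \<Sum>y<N. (cmod ((\<Sum>i<N. cnj (A x i) * cnj (B i y)) + (\<Sum>i<N. C y i * D i x)))\<^sup>2)
      / (4 * real N)"
    unfolding N_def by (rule swap_test_accept_prob) (rule abcd_state_amplitude)
  also have "\<dots> = (\<Sum>x<N. \<Sum>y<N. (cmod (cnj (?P x y) + ?Q y x))\<^sup>2) / (4 * real N)"
    unfolding mmul_def by (simp add: cnj_sum)
  also have "(\<Sum>x<N. \<Sum>y<N. (cmod (cnj (?P x y) + ?Q y x))\<^sup>2)
    = (\<Sum>x<N. \<Sum>y<N. (cmod (?P x y))\<^sup>2) + (\<Sum>x<N. \<Sum>y<N. (cmod (?Q y x))\<^sup>2)
      + 2 * Re (\<Sum>x<N. \<Sum>y<N. ?P x y * ?Q y x)"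
    by (simp add: cmod_cnj_add sum.distrib Re_sum sum_distrib_left)
  also have "(\<Sum>x<N. \<Sum>y<N. (cmod (?Q y x))\<^sup>2) = (\<Sum>y<N. \<Sum>x<N. (cmod (?Q y x))\<^sup>2)"
    by (rule sum.swap)
  also have "(\<Sum>x<N. \<Sum>y<N. ?P x y * ?Q y x) = mtrace N (mmul N (mmul N (mmul N A B) C) D)"
    by (simp only: mmul_assoc[of N ?P C D] mtrace_mmul)
  finally show ?thesis
    using unitary_sum_cmod2[OF is_unitary_mmul[OF A B]] unitary_sum_cmod2[OF is_unitary_mmul[OF C D]]
    unfolding N_def by (simp add: field_simps)
qed

lemma abcd_accept_prob_bounds:
  fixes m :: nat and A B C D :: cmat
  defines "N \<equiv> 2 ^ m"
  defines "t \<equiv> mtrace N (mmul N (mmul N (mmul N A B) C) D)"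
  assumes "is_unitary N A" and "is_unitary N B" and "is_unitary N C" and "is_unitary N D"
  shows "0.9 * real N \<le> Re t \<Longrightarrow> 0.95 \<le> accept_prob m (abcd_state m A B C D)"
    and "Re t \<le> 0.1 * real N \<Longrightarrow> accept_prob m (abcd_state m A B C D) \<le> 0.55"
proof -
  have N: "0 < 2 * real N"
    unfolding N_def by simp
  have accept: "accept_prob m (abcd_state m A B C D) = 1 / 2 + Re t / (2 * real N)"
    using assms(3-6) unfolding t_def N_def by (rule abcd_accept_prob)
  show "0.95 \<le> accept_prob m (abcd_state m A B C D)" if "0.9 * real N \<le> Re t"
  proof -
    have "0.45 \<le> Re t / (2 * real N)"
      using that by (subst pos_le_divide_eq[OF N]) simp
    then show ?thesis
      using accept by simp
  qed
  show "accept_prob m (abcd_state m A B C D) \<le> 0.55" if "Re t \<le> 0.1 * real N"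
  proof -
    have "Re t / (2 * real N) \<le> 0.05"
      using that by (subst pos_divide_le_eq[OF N]) simp
    then show ?thesis
      using accept by simp
  qed
qed

theorem theorem4p2:
  "\<exists>c::real. c > 0 \<and>
     (\<forall>n::nat. n \<ge> 1 \<longrightarrow>
       (let N = 2 ^ n in
        \<exists>(k::nat) (m::nat) (UA :: cmat \<Rightarrow> cmat \<Rightarrow> cmat) (UB :: cmat \<Rightarrow> cmat \<Rightarrow> cmat).
          real n \<le> c * real k \<and> real k \<le> c * real n \<and> k \<le> m + 1 \<and>
          real (2 * (m + 1)) \<le> c * real n \<and>
          (\<forall>A\<in>SU N. \<forall>C\<in>SU N. is_unitary (2 ^ (m + 1)) (UA A C)) \<and>
          (\<forall>B\<in>SU N. \<forall>D\<in>SU N. is_unitary (2 ^ (m + 1)) (UB B D)) \<and>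
          (\<forall>A\<in>SU N. \<forall>B\<in>SU N. \<forall>C\<in>SU N. \<forall>D\<in>SU N.
             (let psi = joint_state (m + 1) k (UA A C) (UB B D);
                  t = mtrace N (mmul N (mmul N (mmul N A B) C) D) in
              fingerprint_form N m psi \<and>
              (Im t = 0 \<and> Re t \<ge> 0.9 * real N \<longrightarrow> accept_prob m psi \<ge> 0.95) \<and>
              (Im t = 0 \<and> Re t \<le> 0.1 * real N \<longrightarrow> accept_prob m psi \<le> 0.55)))))"
proof (intro exI[of _ 4] conjI allI impI, goal_cases)
  case 1
  show ?case by simp
next
  case (2 n)
  let ?N = "2 ^ n :: nat"
  have dim: "2 ^ (n + 1) = 2 * ?N"
    by simp
  show ?case
    unfolding Let_def
  proof (rule exI[of _ "n + 1"], rule exI[of _ n], rule exI[of _ "abcd_alice ?N"],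
      rule exI[of _ "abcd_bob ?N"], intro conjI ballI)
    show "real n \<le> 4 * real (n + 1)" "real (n + 1) \<le> 4 * real n" "n + 1 \<le> n + 1"
      "real (2 * (n + 1)) \<le> 4 * real n"
      using \<open>1 \<le> n\<close> by simp_all
  next
    fix A C assume "A \<in> SU ?N" "C \<in> SU ?N"
    then show "is_unitary (2 ^ (n + 1)) (abcd_alice ?N A C)"
      unfolding dim by (intro is_unitary_abcd_alice SU_is_unitary)
  next
    fix B D assume "B \<in> SU ?N" "D \<in> SU ?N"
    then show "is_unitary (2 ^ (n + 1)) (abcd_bob ?N B D)"
      unfolding dim by (intro is_unitary_abcd_bob SU_is_unitary)
  next
    fix A B C D assume "A \<in> SU ?N" "B \<in> SU ?N" "C \<in> SU ?N" "D \<in> SU ?N"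
    then have unitary: "is_unitary ?N A" "is_unitary ?N B" "is_unitary ?N C" "is_unitary ?N D"
      by (simp_all add: SU_is_unitary)
    let ?t = "mtrace ?N (mmul ?N (mmul ?N (mmul ?N A B) C) D)"
    show "fingerprint_form ?N n (abcd_state n A B C D)"
      using unitary by (rule abcd_fingerprint_form)
    show "Im ?t = 0 \<and> 0.9 * real ?N \<le> Re ?t \<longrightarrow> 0.95 \<le> accept_prob n (abcd_state n A B C D)"
      using abcd_accept_prob_bounds(1)[OF unitary] by blast
    show "Im ?t = 0 \<and> Re ?t \<le> 0.1 * real ?N \<longrightarrow> accept_prob n (abcd_state n A B C D) \<le> 0.55"
      using abcd_accept_prob_bounds(2)[OF unitary] by blast
  qed
qed

end
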